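(* Let $\omega(s,t)$ be a non-negative bounded continuous function on $\{(s,t):0\le s\le t\}$ and let $N$ be a point process with last-arrival-time dependent intensity $\omega$ (as defined in the context). Then for every $k=1,2,\ldots$ and all $0\le s<t$, \[\frac{\partial}{\partial t}\,\mathbb{P}\bigl(N(t)=N(s)=k\bigr)=-\int_0^s\omega(u,t)\,\frac{\partial}{\partial u}\mathbb{P}\bigl(N(t)=N(u)=k\bigr)\,du.\]
   Context: A point process with last-arrival-time dependent intensity $\omega$ is a non-decreasing, right-continuous, non-negative integer valued stochastic process $N(t)$, $t\ge0$, with $N(0)=0$, such that, writing $\tau_0=0$, $\tau_k=\inf\{t\ge0:N(t)\ge k\}$ ($k\ge1$) for the arrival times and $\mathcal{F}_t=\sigma[N(s),s\le t]$, for every $k\ge1$ one has $\mathbb{P}(t<\tau_k\mid\mathcal{F}_{\tau_{k-1}})=\exp\bigl(-\int_{\tau_{k-1}}^t\omega(\tau_{k-1},u)\,du\bigr)$ on $\{t\ge\tau_{k-1}\}$. *)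

theory Defs
  imports "HOL-Probability.Probability"
begin

definition nat_filtration :: "'a measure \<Rightarrow> (real \<Rightarrow> 'a \<Rightarrow> nat) \<Rightarrow> real \<Rightarrow> 'a measure" where
  "nat_filtration M N t =
     sigma (space M) {N s -` A \<inter> space M | s A. 0 \<le> s \<and> s \<le> t}"

definition nat_filtration_inf :: "'a measure \<Rightarrow> (real \<Rightarrow> 'a \<Rightarrow> nat) \<Rightarrow> 'a measure" where
  "nat_filtration_inf M N = sigma (space M) {N s -` A \<inter> space M | s A. 0 \<le> s}"

definition stopped_sigma :: "'a measure \<Rightarrow> (real \<Rightarrow> 'a \<Rightarrow> nat) \<Rightarrow> ('a \<Rightarrow> ereal) \<Rightarrow> 'a measure" where
  "stopped_sigma M N T =
     sigma (space M) {A. A \<in> sets (nat_filtration_inf M N) \<and>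
        (\<forall>t\<ge>0. {x \<in> A. T x \<le> ereal t} \<in> sets (nat_filtration M N t))}"

definition arrival_time :: "(real \<Rightarrow> 'a \<Rightarrow> nat) \<Rightarrow> nat \<Rightarrow> 'a \<Rightarrow> ereal" where
  "arrival_time N k x = Inf {ereal t | t. 0 \<le> t \<and> k \<le> N t x}"

definition last_arrival_intensity_process ::
    "'a measure \<Rightarrow> (real \<Rightarrow> real \<Rightarrow> real) \<Rightarrow> (real \<Rightarrow> 'a \<Rightarrow> nat) \<Rightarrow> bool" where
  "last_arrival_intensity_process M \<omega> N \<longleftrightarrow>
     (\<forall>t. N t \<in> measurable M (count_space UNIV)) \<and>
     (\<forall>x\<in>space M. N 0 x = 0 \<and> mono_on {0..} (\<lambda>t. N t x) \<and>
        (\<forall>t\<ge>0. continuous (at_right t) (\<lambda>s. N s x))) \<and>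
     (\<forall>k\<ge>1. \<forall>t\<ge>0. AE x in M. arrival_time N (k - 1) x \<le> ereal t \<longrightarrow>
        real_cond_exp M (stopped_sigma M N (arrival_time N (k - 1)))
          (indicator {y. ereal t < arrival_time N k y}) x
        = exp (- integral {real_of_ereal (arrival_time N (k - 1) x)..t}
                 (\<lambda>u. \<omega> (real_of_ereal (arrival_time N (k - 1) x)) u)))"

end

theory Submission
  imports Defs
begin

text \<open>Write \<open>G(a, r) = exp (-\<integral>\<^sub>a\<^sup>r \<omega>(a, \<cdot>))\<close>. Conditioning on the history up to the
  \<open>k\<close>-th arrival \<open>\<tau>\<^sub>k\<close> gives \<open>P(\<tau>\<^sub>k \<le> v, r < \<tau>\<^sub>k\<^sub>+\<^sub>1) = E[1{\<tau>\<^sub>k \<le> v} G(\<tau>\<^sub>k, r)]\<close> for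
  \<open>v \<le> r\<close>. Taking \<open>v = r\<close> identifies the law of \<open>\<tau>\<^sub>k\<^sub>+\<^sub>1\<close> as absolutely continuous with density
  \<open>f\<^sub>k\<^sub>+\<^sub>1(r) = E[1{\<tau>\<^sub>k \<le> r} \<omega>(\<tau>\<^sub>k, r) G(\<tau>\<^sub>k, r)]\<close>, which is continuous on \<open>[0, \<infinity>)\<close> because
  \<open>\<tau>\<^sub>k\<close> has no atoms for \<open>k \<ge> 1\<close>. Hence \<open>P(N(r) = N(v) = k) = \<integral>\<^sub>0\<^sup>v f\<^sub>k(a) G(a, r) da\<close>:
  its derivative in \<open>v\<close> is \<open>f\<^sub>k(v) G(v, t)\<close>, and by the Leibniz rule its derivative in \<open>r\<close> is
  \<open>-\<integral>\<^sub>0\<^sup>v f\<^sub>k(a) \<omega>(a, r) G(a, r) da\<close>; together these are the claimed identity.\<close>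

lemma continuous_on_curry_fst:
  assumes "continuous_on UNIV (\<lambda>p. f (fst p) (snd p))"
  shows "continuous_on S (\<lambda>a. f a r)"
proof -
  have "continuous_on UNIV (\<lambda>a. (a, r))" by (intro continuous_intros)
  from continuous_on_compose2[OF assms this] show ?thesis
    by (auto intro: continuous_on_subset)
qed

lemma continuous_on_curry_snd:
  assumes "continuous_on UNIV (\<lambda>p. f (fst p) (snd p))"
  shows "continuous_on S (f a)"
proof -
  have "continuous_on UNIV (\<lambda>r. (a, r))" by (intro continuous_intros)
  from continuous_on_compose2[OF assms this] show ?thesis
    by (auto intro: continuous_on_subset)
qed

lemma integral_rescale_unit_interval:
  fixes g :: "real \<Rightarrow> real"
  assumes "continuous_on {a..u} g" and "a \<le> u"
  shows "(u - a) * integral {0..1} (\<lambda>\<theta>. g (a + \<theta> * (u - a))) = integral {a..u} g"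
proof (cases "a = u")
  case False
  with assms have au: "0 < u - a" by simp
  have "(g has_integral integral {a..u} g) (cbox a u)"
    using integrable_continuous_interval[OF assms(1)] by (simp add: integrable_integral)
  from has_integral_affinity'[OF this au, of a]
  have "((\<lambda>\<theta>. g ((u - a) * \<theta> + a)) has_integral integral {a..u} g / (u - a)) {0..1}"
    using au by (simp add: cbox_interval divide_inverse mult.commute)
  then have "integral {0..1} (\<lambda>\<theta>. g (a + \<theta> * (u - a))) = integral {a..u} g / (u - a)"
    by (simp add: has_integral_iff algebra_simps)
  then show ?thesis using au by simp
qed simp

lemma borel_measurable_indicator_atLeastAtMost[measurable (raw)]:
  fixes f g h :: "'a \<Rightarrow> real"
  assumes "f \<in> borel_measurable F" "g \<in> borel_measurable F" "h \<in> borel_measurable F"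
  shows "(\<lambda>x. indicator {g x..h x} (f x) :: real) \<in> borel_measurable F"
  unfolding indicator_def atLeastAtMost_iff using assms by measurable

text \<open>Composing with a continuous retraction of the plane onto the wedge \<open>0 \<le> a \<le> r\<close> extends
  the rate continuously, so that survival functions are defined and jointly continuous everywhere.\<close>
definition rate_ext :: "(real \<Rightarrow> real \<Rightarrow> real) \<Rightarrow> real \<Rightarrow> real \<Rightarrow> real" where
  "rate_ext \<omega> a r = \<omega> (max 0 a) (max (max 0 a) r)"

text \<open>The cumulative rate \<open>\<integral>\<^sub>a\<^sup>u \<omega>(a, \<cdot>)\<close>, written over the fixed interval \<open>[0, 1]\<close> so
  that its joint continuity in \<open>(a, u)\<close> is continuity of a parametric integral.\<close>
definition cum_rate :: "(real \<Rightarrow> real \<Rightarrow> real) \<Rightarrow> real \<Rightarrow> real \<Rightarrow> real" where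
  "cum_rate \<omega> a u = (u - a) * integral {0..1} (\<lambda>\<theta>. rate_ext \<omega> a (a + \<theta> * (u - a)))"

definition survival :: "(real \<Rightarrow> real \<Rightarrow> real) \<Rightarrow> real \<Rightarrow> real \<Rightarrow> real" where
  "survival \<omega> a u = exp (- cum_rate \<omega> a u)"

lemma rate_ext_eq: "0 \<le> a \<Longrightarrow> a \<le> r \<Longrightarrow> rate_ext \<omega> a r = \<omega> a r"
  by (simp add: rate_ext_def)

locale continuous_rate =
  fixes \<omega> :: "real \<Rightarrow> real \<Rightarrow> real"
  assumes rate_continuous: "continuous_on {p. 0 \<le> fst p \<and> fst p \<le> snd p} (\<lambda>p. \<omega> (fst p) (snd p))"
begin

lemma rate_ext_continuous: "continuous_on UNIV (\<lambda>p. rate_ext \<omega> (fst p) (snd p))"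
proof -
  have retraction: "continuous_on UNIV (\<lambda>p::real \<times> real. (max 0 (fst p), max (max 0 (fst p)) (snd p)))"
    by (intro continuous_intros)
  have "range (\<lambda>p::real \<times> real. (max 0 (fst p), max (max 0 (fst p)) (snd p)))
      \<subseteq> {p. 0 \<le> fst p \<and> fst p \<le> snd p}"
    by auto
  from continuous_on_compose2[OF rate_continuous retraction this] show ?thesis
    by (simp add: rate_ext_def)
qed

lemma cum_rate_continuous: "continuous_on UNIV (\<lambda>p. cum_rate \<omega> (fst p) (snd p))"
proof -
  note rate_ext = continuous_on_compose2[OF rate_ext_continuous, of _ "\<lambda>x. (f x, g x)" for f g, simplified]
  have "continuous_on (UNIV \<times> cbox 0 1)
      (\<lambda>(p::real \<times> real, \<theta>::real). rate_ext \<omega> (fst p) (fst p + \<theta> * (snd p - fst p)))"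
    by (auto simp: split_beta intro!: continuous_intros rate_ext)
  from integral_continuous_on_param[OF this] show ?thesis
    unfolding cum_rate_def by (auto intro!: continuous_intros simp: cbox_interval)
qed

lemma survival_continuous: "continuous_on UNIV (\<lambda>p. survival \<omega> (fst p) (snd p))"
  unfolding survival_def by (intro continuous_intros cum_rate_continuous)

lemma cum_rate_eq_integral: "a \<le> u \<Longrightarrow> cum_rate \<omega> a u = integral {a..u} (rate_ext \<omega> a)"
  unfolding cum_rate_def
  by (rule integral_rescale_unit_interval[OF continuous_on_curry_snd[OF rate_ext_continuous]])

lemma survival_measurable[measurable]: "(\<lambda>a. survival \<omega> a t) \<in> borel_measurable borel"
  by (rule borel_measurable_continuous_onI[OF continuous_on_curry_fst[OF survival_continuous]])

lemma survival_eq_exp_integral: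
  assumes "0 \<le> a" "a \<le> t"
  shows "survival \<omega> a t = exp (- integral {a..t} (\<omega> a))"
proof -
  have "integral {a..t} (rate_ext \<omega> a) = integral {a..t} (\<omega> a)"
    by (rule integral_cong) (use assms in \<open>auto simp: rate_ext_eq\<close>)
  then show ?thesis by (simp add: survival_def cum_rate_eq_integral[OF assms(2)])
qed

lemma survival_has_derivative_within:
  assumes "a \<le> r" "r \<le> b"
  shows "(survival \<omega> a has_real_derivative - (rate_ext \<omega> a r * survival \<omega> a r)) (at r within {a..b})"
proof -
  have "((\<lambda>u. integral {a..u} (rate_ext \<omega> a)) has_real_derivative rate_ext \<omega> a r) (at r within {a..b})"
    by (rule integral_has_real_derivative[OF continuous_on_curry_snd[OF rate_ext_continuous]])
      (use assms in auto)
  then have "((\<lambda>u. exp (- integral {a..u} (rate_ext \<omega> a))) has_real_derivative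
      exp (- integral {a..r} (rate_ext \<omega> a)) * - rate_ext \<omega> a r) (at r within {a..b})"
    by (intro derivative_eq_intros) auto
  also have "exp (- integral {a..r} (rate_ext \<omega> a)) * - rate_ext \<omega> a r
      = - (rate_ext \<omega> a r * survival \<omega> a r)"
    using assms by (simp add: survival_def cum_rate_eq_integral)
  finally show ?thesis
    by (rule has_field_derivative_transform_within[OF _ zero_less_one])
      (use assms in \<open>auto simp: survival_def cum_rate_eq_integral\<close>)
qed

lemma survival_has_derivative:
  "a < r \<Longrightarrow> (survival \<omega> a has_real_derivative - (rate_ext \<omega> a r * survival \<omega> a r)) (at r)"
  using survival_has_derivative_within[of a r "r + 1"] at_within_Icc_at[of a r "r + 1"] by auto

definition waiting_density :: "real \<Rightarrow> real \<Rightarrow> real" where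
  "waiting_density a r = rate_ext \<omega> a r * survival \<omega> a r"

lemma waiting_density_continuous: "continuous_on UNIV (\<lambda>p. waiting_density (fst p) (snd p))"
  unfolding waiting_density_def by (intro continuous_intros rate_ext_continuous survival_continuous)

lemma waiting_density_measurable[measurable (raw)]:
  assumes "f \<in> borel_measurable F" "g \<in> borel_measurable F"
  shows "(\<lambda>x. waiting_density (f x) (g x)) \<in> borel_measurable F"
proof -
  have pair: "(\<lambda>x. (f x, g x)) \<in> measurable F (borel \<Otimes>\<^sub>M borel)"
    using assms by measurable
  have "(\<lambda>p. waiting_density (fst p) (snd p)) \<in> borel_measurable (borel \<Otimes>\<^sub>M borel)"
    unfolding borel_prod by (rule borel_measurable_continuous_onI[OF waiting_density_continuous])
  from measurable_compose[OF pair this] show ?thesis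
    by simp
qed

lemma waiting_density_has_integral:
  assumes "a \<le> x"
  shows "(waiting_density a has_integral 1 - survival \<omega> a x) {a..x}"
proof -
  have "((\<lambda>r. - (rate_ext \<omega> a r * survival \<omega> a r)) has_integral survival \<omega> a x - survival \<omega> a a) {a..x}"
    by (rule fundamental_theorem_of_calculus[OF assms])
      (auto simp: has_real_derivative_iff_has_vector_derivative[symmetric]
        intro!: survival_has_derivative_within)
  from has_integral_neg[OF this] show ?thesis
    by (simp add: survival_def cum_rate_def waiting_density_def[abs_def])
qed

lemma truncated_waiting_density_tendsto:
  assumes lim: "u \<longlonglongrightarrow> a" and nonneg: "\<And>n. 0 \<le> u n" and "b \<noteq> a \<or> a = 0"
  shows "(\<lambda>n. indicator {0..u n} b * waiting_density b (u n)) \<longlonglongrightarrow> indicator {0..a} b * waiting_density b a"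
proof -
  have cont: "(\<lambda>n. waiting_density b (u n)) \<longlonglongrightarrow> waiting_density b a"
    by (rule continuous_on_tendsto_compose[OF continuous_on_curry_snd[OF waiting_density_continuous,
          where S=UNIV] lim]) auto
  consider "b < 0" | "a < b" | "0 \<le> b" "b < a" | "b = 0" "a = 0"
    using assms(3) by linarith
  then show ?thesis
  proof cases
    case 2
    have "eventually (\<lambda>n. u n < b) sequentially"
      using order_tendstoD(2)[OF lim 2] .
    then have "eventually (\<lambda>n. indicator {0..u n} b * waiting_density b (u n) = 0) sequentially"
      by eventually_elim simp
    with 2 show ?thesis
      by (simp add: tendsto_eventually)
  next
    case 3
    have "eventually (\<lambda>n. b < u n) sequentially"
      using order_tendstoD(1)[OF lim \<open>b < a\<close>] .
    then have "eventually (\<lambda>n. waiting_density b (u n) = indicator {0..u n} b * waiting_density b (u n))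
        sequentially"
      by eventually_elim (use 3 in simp)
    from Lim_transform_eventually[OF cont this] 3 show ?thesis
      by simp
  qed (use cont nonneg in simp_all)
qed

lemma integral_survival_has_derivative:
  assumes f: "continuous_on {0..s} f" and "s < t"
  shows "((\<lambda>r. integral {0..s} (\<lambda>a. f a * survival \<omega> a r)) has_real_derivative
      - integral {0..s} (\<lambda>a. f a * waiting_density a t)) (at t)"
proof -
  have "((\<lambda>r. integral (cbox 0 s) (\<lambda>a. f a * survival \<omega> a r)) has_field_derivative
      integral (cbox 0 s) (\<lambda>a. f a * - waiting_density a t)) (at t within {s<..})"
  proof (rule leibniz_rule_field_derivative)
    fix r a
    assume "r \<in> {s<..}" "a \<in> cbox 0 s"
    then have "a < r" by (simp add: cbox_interval)
    show "((\<lambda>r. f a * survival \<omega> a r) has_field_derivative f a * - waiting_density a r) (at r within {s<..})"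
      unfolding waiting_density_def
      by (rule DERIV_cmult, rule has_field_derivative_at_within, rule survival_has_derivative[OF \<open>a < r\<close>])
  next
    show "(\<lambda>a. f a * survival \<omega> a r) integrable_on cbox 0 s" for r
      unfolding cbox_interval
      by (intro integrable_continuous_interval continuous_on_mult[OF f]
          continuous_on_curry_fst[OF survival_continuous])
  next
    have "continuous_on ({s<..} \<times> cbox 0 s) (\<lambda>p. f (snd p))"
      by (rule continuous_on_compose2[OF f continuous_on_snd[OF continuous_on_id]])
        (auto simp: cbox_interval)
    moreover have "continuous_on ({s<..} \<times> cbox 0 s) (\<lambda>p. waiting_density (snd p) (fst p))"
      using continuous_on_compose2[OF waiting_density_continuous, of _ "\<lambda>p. (snd p, fst p)"]
      by (simp add: continuous_on_Pair continuous_on_fst continuous_on_snd continuous_on_id)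
    ultimately show "continuous_on ({s<..} \<times> cbox 0 s) (\<lambda>(r, a). f a * - waiting_density a r)"
      unfolding split_beta by (intro continuous_on_mult continuous_on_minus)
  next
    show "t \<in> {s<..}" using \<open>s < t\<close> by simp
  qed (rule convex_real_interval)
  moreover have "integral (cbox 0 s) (\<lambda>a. f a * - waiting_density a t)
      = - integral {0..s} (\<lambda>a. f a * waiting_density a t)"
    unfolding cbox_interval mult_minus_right by (rule integral_neg)
  ultimately show ?thesis
    using at_within_open[of t "{s<..}"] \<open>s < t\<close> by (simp add: cbox_interval)
qed

end

locale bounded_rate = continuous_rate +
  fixes B :: real
  assumes rate_nonneg: "\<And>s t. 0 \<le> s \<Longrightarrow> s \<le> t \<Longrightarrow> 0 \<le> \<omega> s t"
    and rate_bounded: "\<And>s t. 0 \<le> s \<Longrightarrow> s \<le> t \<Longrightarrow> \<omega> s t \<le> B"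
begin

lemma rate_bound_nonneg: "0 \<le> B"
  using rate_nonneg[of 0 0] rate_bounded[of 0 0] by simp

lemma rate_ext_nonneg: "0 \<le> rate_ext \<omega> a r"
  by (simp add: rate_ext_def rate_nonneg)

lemma rate_ext_le_bound: "rate_ext \<omega> a r \<le> B"
  by (simp add: rate_ext_def rate_bounded)

lemma survival_le_1:
  assumes "a \<le> u"
  shows "survival \<omega> a u \<le> 1"
proof -
  have "0 \<le> integral {a..u} (rate_ext \<omega> a)"
    by (intro integral_nonneg integrable_continuous_interval
        continuous_on_curry_snd[OF rate_ext_continuous] rate_ext_nonneg)
  then show ?thesis by (simp add: survival_def cum_rate_eq_integral[OF assms])
qed

lemma waiting_density_nonneg: "0 \<le> waiting_density a r"
  by (simp add: waiting_density_def survival_def rate_ext_nonneg)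

lemma waiting_density_le_bound: "a \<le> r \<Longrightarrow> waiting_density a r \<le> B"
  using mult_mono[OF rate_ext_le_bound survival_le_1 rate_bound_nonneg, of a r a r]
  by (simp add: waiting_density_def survival_def)

end

lemma arrival_time_nonneg: "0 \<le> arrival_time N k x"
  unfolding arrival_time_def by (rule Inf_greatest) auto

lemma arrival_time_0: "arrival_time N 0 x = 0"
  unfolding arrival_time_def by (rule antisym[OF Inf_lower]) (force, rule Inf_greatest, auto)

lemma arrival_time_le_Suc: "arrival_time N k x \<le> arrival_time N (Suc k) x"
  unfolding arrival_time_def by (rule Inf_superset_mono) auto

lemma arrival_time_le_iff:
  assumes mono: "mono_on {0..} (\<lambda>t. N t x)" and right_cont: "continuous (at_right u) (\<lambda>t. N t x)"
    and "0 \<le> u"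
  shows "arrival_time N k x \<le> ereal u \<longleftrightarrow> k \<le> N u x"
proof
  assume "k \<le> N u x"
  then show "arrival_time N k x \<le> ereal u"
    unfolding arrival_time_def using \<open>0 \<le> u\<close> by (intro Inf_lower) auto
next
  assume le: "arrival_time N k x \<le> ereal u"
  have "((\<lambda>t. N t x) \<longlongrightarrow> N u x) (at_right u)"
    using right_cont by (simp add: continuous_within)
  then have "eventually (\<lambda>t. N t x \<in> {N u x}) (at_right u)"
    by (rule topological_tendstoD) (auto intro: discrete_topology_class.open_discrete)
  then obtain b where "u < b" and const: "\<And>t. u < t \<Longrightarrow> t < b \<Longrightarrow> N t x = N u x"
    by (auto simp: eventually_at_right_field)
  with le have "Inf {ereal t | t. 0 \<le> t \<and> k \<le> N t x} < ereal b"
    unfolding arrival_time_def using le_less_trans[of _ "ereal u" "ereal b"] by simp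
  then obtain t where t: "0 \<le> t" "k \<le> N t x" "t < b"
    by (auto simp: Inf_less_iff)
  show "k \<le> N u x"
  proof (cases "t \<le> u")
    case True
    then show ?thesis using mono t by (auto simp: mono_on_def intro: order_trans)
  qed (use const t in auto)
qed

locale last_arrival_process = prob_space M + bounded_rate \<omega> B
  for M :: "'a measure" and \<omega> :: "real \<Rightarrow> real \<Rightarrow> real" and B :: real +
  fixes N :: "real \<Rightarrow> 'a \<Rightarrow> nat"
  assumes process: "last_arrival_intensity_process M \<omega> N"
begin

abbreviation "\<tau> \<equiv> arrival_time N"

lemma N_measurable[measurable]: "N t \<in> measurable M (count_space UNIV)"
  using process unfolding last_arrival_intensity_process_def by auto

lemma N_mono: "x \<in> space M \<Longrightarrow> 0 \<le> a \<Longrightarrow> a \<le> b \<Longrightarrow> N a x \<le> N b x"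
  using process unfolding last_arrival_intensity_process_def by (auto simp: mono_on_def)

lemma arrival_time_le_iff_count:
  assumes "x \<in> space M" and "0 \<le> u"
  shows "\<tau> k x \<le> ereal u \<longleftrightarrow> k \<le> N u x"
  using process assms unfolding last_arrival_intensity_process_def
  by (intro arrival_time_le_iff) auto

lemma arrival_time_measurable[measurable]: "\<tau> k \<in> borel_measurable M"
proof (rule borel_measurableI_le)
  fix y :: ereal
  have empty: "{x \<in> space M. \<tau> k x \<le> y} = {}" if "y < 0"
    using that arrival_time_nonneg[of N k] by (auto simp: not_le[symmetric] intro: order_trans)
  show "{x \<in> space M. \<tau> k x \<le> y} \<in> sets M"
  proof (cases "y < 0")
    case False
    then consider u where "y = ereal u" "0 \<le> u" | "y = \<infinity>"
      by (cases y) auto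
    then show ?thesis
    proof cases
      case 1
      then have "{x \<in> space M. \<tau> k x \<le> y} = {x \<in> space M. k \<le> N u x}"
        using arrival_time_le_iff_count by auto
      then show ?thesis by simp
    qed simp
  qed (simp add: empty)
qed

lemma count_stays_iff_arrival_times:
  assumes "x \<in> space M" "0 \<le> v" "v \<le> r"
  shows "N r x = k \<and> N v x = k \<longleftrightarrow> \<tau> k x \<le> ereal v \<and> ereal r < \<tau> (Suc k) x"
  using N_mono[OF assms] arrival_time_le_iff_count[OF assms(1,2), of k]
    arrival_time_le_iff_count[OF assms(1), of r "Suc k"] assms
  by (auto simp: not_le[symmetric])

lemma count_generators_subset: "{N s -` A \<inter> space M | s A. P s} \<subseteq> Pow (space M)"
  by auto

lemma sets_nat_filtration_inf: "sets (nat_filtration_inf M N) \<subseteq> sets M"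
  unfolding nat_filtration_inf_def sets_measure_of[OF count_generators_subset]
  by (rule sets.sigma_sets_subset) auto

lemma stopped_generators_subset:
  "{A. A \<in> sets (nat_filtration_inf M N) \<and> (\<forall>t\<ge>0. {x \<in> A. T x \<le> ereal t} \<in> sets (nat_filtration M N t))}
   \<subseteq> Pow (space M)"
  using sets_nat_filtration_inf sets.sets_into_space by blast

lemma finite_measure_subalgebra_stopped_sigma:
  "finite_measure_subalgebra M (stopped_sigma M N T)"
proof -
  have "subalgebra M (stopped_sigma M N T)"
    unfolding subalgebra_def stopped_sigma_def using sets_nat_filtration_inf
    by (auto simp: sets_measure_of[OF stopped_generators_subset]
        space_measure_of[OF stopped_generators_subset] intro!: sets.sigma_sets_subset)
  then show ?thesis
    unfolding finite_measure_subalgebra_def finite_measure_subalgebra_axioms_def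
    using finite_measure_axioms by auto
qed

lemma arrival_time_le_in_stopped_sigma:
  assumes "0 \<le> u"
  shows "{x \<in> space M. \<tau> k x \<le> ereal u} \<in> sets (stopped_sigma M N (\<tau> k))"
proof -
  have count_set: "{x \<in> space M. \<tau> k x \<le> ereal v} = N v -` {k..} \<inter> space M" if "0 \<le> v" for v
    using arrival_time_le_iff_count[OF _ that] by auto
  have "{x \<in> space M. \<tau> k x \<le> ereal u} \<in> sets (nat_filtration_inf M N)"
    unfolding nat_filtration_inf_def sets_measure_of[OF count_generators_subset] count_set[OF assms]
    using assms by (intro sigma_sets.Basic) blast
  moreover have "{x \<in> {x \<in> space M. \<tau> k x \<le> ereal u}. \<tau> k x \<le> ereal t} \<in> sets (nat_filtration M N t)"
    if "0 \<le> t" for t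
  proof -
    have "{x \<in> {x \<in> space M. \<tau> k x \<le> ereal u}. \<tau> k x \<le> ereal t} = N (min u t) -` {k..} \<inter> space M"
      using count_set[of "min u t"] assms that by (auto simp: min_le_iff_disj)
    then show ?thesis
      unfolding nat_filtration_def sets_measure_of[OF count_generators_subset]
      using assms that by (intro sigma_sets.Basic) (simp, rule exI[of _ "min u t"], auto)
  qed
  ultimately show ?thesis
    unfolding stopped_sigma_def sets_measure_of[OF stopped_generators_subset]
    by (intro sigma_sets.Basic) auto
qed

lemma prob_between_arrivals:
  assumes "0 \<le> u" and "u \<le> t"
  shows "measure M {x \<in> space M. \<tau> k x \<le> ereal u \<and> ereal t < \<tau> (Suc k) x}
    = (\<integral>x. indicator {x \<in> space M. \<tau> k x \<le> ereal u} x * survival \<omega> (real_of_ereal (\<tau> k x)) t \<partial>M)"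
proof -
  define F where "F = stopped_sigma M N (\<tau> k)"
  interpret F: finite_measure_subalgebra M F
    unfolding F_def by (rule finite_measure_subalgebra_stopped_sigma)
  define A where "A = {x \<in> space M. \<tau> k x \<le> ereal u}"
  define f :: "'a \<Rightarrow> real" where "f = indicator {y. ereal t < \<tau> (Suc k) y}"
  have [measurable]: "A \<in> sets M" "f \<in> borel_measurable M"
    unfolding A_def f_def by measurable
  have "integrable M f"
    by (rule integrable_const_bound[where B=1]) (auto simp: f_def)
  then have "(\<integral>x \<in> A. f x \<partial>M) = (\<integral>x \<in> A. real_cond_exp M F f x \<partial>M)"
    by (rule F.real_cond_exp_intA) (use arrival_time_le_in_stopped_sigma[OF \<open>0 \<le> u\<close>] in \<open>simp add: A_def F_def\<close>)
  also have "\<dots> = (\<integral>x \<in> A. survival \<omega> (real_of_ereal (\<tau> k x)) t \<partial>M)"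
  proof (rule set_lebesgue_integral_cong_AE)
    have "AE x in M. \<tau> k x \<le> ereal t \<longrightarrow>
        real_cond_exp M F f x = exp (- integral {real_of_ereal (\<tau> k x)..t} (\<omega> (real_of_ereal (\<tau> k x))))"
      using process assms unfolding last_arrival_intensity_process_def F_def f_def
      by (auto dest!: spec[of _ "Suc k"])
    then show "AE x\<in>A in M. real_cond_exp M F f x = survival \<omega> (real_of_ereal (\<tau> k x)) t"
    proof eventually_elim
      case (elim x)
      show ?case
      proof
        assume "x \<in> A"
        then have "\<tau> k x \<le> ereal t"
          using assms by (auto simp: A_def intro: order_trans)
        moreover have "\<tau> k x = ereal (real_of_ereal (\<tau> k x))"
          using \<open>\<tau> k x \<le> ereal t\<close> arrival_time_nonneg[of N k x] by (cases "\<tau> k x") auto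
        ultimately show "real_cond_exp M F f x = survival \<omega> (real_of_ereal (\<tau> k x)) t"
          using elim survival_eq_exp_integral[of "real_of_ereal (\<tau> k x)" t] arrival_time_nonneg[of N k x]
          by (metis ereal_less_eq(3) real_of_ereal_pos)
      qed
    qed
  qed (auto simp: f_def)
  also have "(\<integral>x \<in> A. f x \<partial>M) = measure M {x \<in> space M. \<tau> k x \<le> ereal u \<and> ereal t < \<tau> (Suc k) x}"
  proof -
    have "(\<lambda>x. indicator A x * f x) = indicator {x \<in> space M. \<tau> k x \<le> ereal u \<and> ereal t < \<tau> (Suc k) x}"
      by (auto simp: A_def f_def indicator_def)
    then show ?thesis
      unfolding set_lebesgue_integral_def by simp
  qed
  finally show ?thesis
    unfolding set_lebesgue_integral_def A_def by (simp add: mult.commute)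
qed

definition arrival_law :: "nat \<Rightarrow> real measure" where
  "arrival_law k = distr (density M (\<lambda>x. ennreal (indicator {x. \<tau> k x < \<infinity>} x))) borel (\<lambda>x. real_of_ereal (\<tau> k x))"

lemma sets_arrival_law[measurable_cong, simp]: "sets (arrival_law k) = sets borel"
  by (simp add: arrival_law_def)

lemma space_arrival_law[simp]: "space (arrival_law k) = UNIV"
  by (simp add: arrival_law_def)

lemma measurable_arrival_time_density:
  "(\<lambda>x. real_of_ereal (\<tau> k x)) \<in> measurable (density M (\<lambda>x. ennreal (indicator {x. \<tau> k x < \<infinity>} x))) borel"
  by (subst measurable_cong_sets[OF sets_density refl]) measurable

lemma integral_arrival_law:
  fixes g :: "real \<Rightarrow> real"
  assumes [measurable]: "g \<in> borel_measurable borel"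
  shows "(\<integral>a. g a \<partial>arrival_law k) = (\<integral>x. indicator {x. \<tau> k x < \<infinity>} x * g (real_of_ereal (\<tau> k x)) \<partial>M)"
  unfolding arrival_law_def
  by (subst integral_distr[OF measurable_arrival_time_density assms]) (auto simp: integral_density)

lemma emeasure_arrival_law:
  assumes [measurable]: "A \<in> sets borel"
  shows "emeasure (arrival_law k) A = emeasure M {x \<in> space M. \<tau> k x < \<infinity> \<and> real_of_ereal (\<tau> k x) \<in> A}"
proof -
  have "emeasure (arrival_law k) A
      = (\<integral>\<^sup>+ x. ennreal (indicator {x. \<tau> k x < \<infinity>} x) * indicator ((\<lambda>x. real_of_ereal (\<tau> k x)) -` A \<inter> space M) x \<partial>M)"
    unfolding arrival_law_def
    by (subst emeasure_distr[OF measurable_arrival_time_density]) (auto simp: emeasure_density)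
  also have "\<dots> = (\<integral>\<^sup>+ x. indicator {x \<in> space M. \<tau> k x < \<infinity> \<and> real_of_ereal (\<tau> k x) \<in> A} x \<partial>M)"
    by (intro nn_integral_cong) (auto simp: indicator_def)
  finally show ?thesis by simp
qed

lemma finite_borel_measure_arrival_law: "finite_borel_measure (arrival_law k)"
proof -
  have "emeasure (arrival_law k) UNIV \<le> emeasure M (space M)"
    by (subst emeasure_arrival_law) (auto intro!: emeasure_mono)
  then have "emeasure (arrival_law k) (space (arrival_law k)) \<noteq> \<infinity>"
    by (auto simp: top_unique)
  then show ?thesis
    unfolding finite_borel_measure_def finite_borel_measure_axioms_def
    by (auto intro: finite_measureI)
qed

lemma measure_arrival_law_le_1: "measure (arrival_law k) A \<le> 1"
proof -
  interpret finite_borel_measure "arrival_law k" by (rule finite_borel_measure_arrival_law)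
  have "measure (arrival_law k) A \<le> measure (arrival_law k) UNIV"
    by (metis bounded_measure space_arrival_law)
  also have "\<dots> = measure M {x \<in> space M. \<tau> k x < \<infinity>}"
    by (simp add: measure_def emeasure_arrival_law)
  finally show ?thesis using prob_le_1 order_trans by blast
qed

lemma integral_arrival_law_atLeastAtMost:
  fixes g :: "real \<Rightarrow> real"
  assumes [measurable]: "g \<in> borel_measurable borel" and "0 \<le> u"
  shows "(\<integral>a. indicator {0..u} a * g a \<partial>arrival_law k)
     = (\<integral>x. indicator {y \<in> space M. \<tau> k y \<le> ereal u} x * g (real_of_ereal (\<tau> k x)) \<partial>M)"
proof -
  have "indicator {x. \<tau> k x < \<infinity>} x * indicator {0..u} (real_of_ereal (\<tau> k x))
      = (indicator {y \<in> space M. \<tau> k y \<le> ereal u} x :: real)" if "x \<in> space M" for x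
    using that \<open>0 \<le> u\<close> arrival_time_nonneg[of N k x] by (cases "\<tau> k x") (auto simp: indicator_def)
  then show ?thesis
    by (subst integral_arrival_law) (auto intro!: Bochner_Integration.integral_cong simp: mult.assoc[symmetric])
qed

lemma measure_arrival_law_Suc_atMost:
  "measure (arrival_law (Suc k)) {..x} = (\<integral>a. indicator {0..x} a * (1 - survival \<omega> a x) \<partial>arrival_law k)"
proof (cases "0 \<le> x")
  case True
  define A where "A = {y \<in> space M. \<tau> k y \<le> ereal x}"
  define A' where "A' = {y \<in> space M. \<tau> (Suc k) y \<le> ereal x}"
  have [measurable]: "A \<in> sets M" "A' \<in> sets M"
    unfolding A_def A'_def by measurable
  have "A' \<subseteq> A"
    unfolding A_def A'_def using arrival_time_le_Suc[of N k] order_trans by blast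
  have survival_bounded: "norm (indicator A y * survival \<omega> (real_of_ereal (\<tau> k y)) x) \<le> 1" for y
  proof (cases "y \<in> A")
    case True
    then have "real_of_ereal (\<tau> k y) \<le> x"
      using arrival_time_nonneg[of N k y] \<open>0 \<le> x\<close> by (cases "\<tau> k y") (auto simp: A_def)
    then show ?thesis
      using True survival_le_1 by (simp add: survival_def)
  qed simp
  have "\<tau> (Suc k) y < \<infinity> \<and> real_of_ereal (\<tau> (Suc k) y) \<in> {..x} \<longleftrightarrow> \<tau> (Suc k) y \<le> ereal x" for y
    using arrival_time_nonneg[of N "Suc k" y] True by (cases "\<tau> (Suc k) y") auto
  then have "measure (arrival_law (Suc k)) {..x} = measure M A'"
    by (simp add: measure_def emeasure_arrival_law A'_def)
  also have "\<dots> = measure M A - measure M {y \<in> space M. \<tau> k y \<le> ereal x \<and> ereal x < \<tau> (Suc k) y}"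
  proof -
    have "A - A' = {y \<in> space M. \<tau> k y \<le> ereal x \<and> ereal x < \<tau> (Suc k) y}"
      by (auto simp: A_def A'_def not_le)
    then show ?thesis
      using finite_measure_Diff[of A A'] \<open>A' \<subseteq> A\<close> by simp
  qed
  also have "\<dots> = (\<integral>y. indicator A y \<partial>M) - (\<integral>y. indicator A y * survival \<omega> (real_of_ereal (\<tau> k y)) x \<partial>M)"
    unfolding A_def by (simp add: prob_between_arrivals[OF True order_refl])
  also have "\<dots> = (\<integral>y. indicator A y * (1 - survival \<omega> (real_of_ereal (\<tau> k y)) x) \<partial>M)"
    by (subst Bochner_Integration.integral_diff[symmetric])
      (auto simp: algebra_simps intro!: integrable_const_bound[where B=1] survival_bounded)
  also have "\<dots> = (\<integral>a. indicator {0..x} a * (1 - survival \<omega> a x) \<partial>arrival_law k)"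
    unfolding A_def by (rule integral_arrival_law_atLeastAtMost[symmetric, OF _ True]) measurable
  finally show ?thesis .
next
  case False
  have no_arrival: "{y \<in> space M. \<tau> (Suc k) y < \<infinity> \<and> real_of_ereal (\<tau> (Suc k) y) \<in> {..x}} = {}"
    using False arrival_time_nonneg[of N "Suc k"] by (auto simp: real_of_ereal_pos not_le intro: less_le_trans)
  have "measure (arrival_law (Suc k)) {..x} = 0"
    unfolding measure_def by (subst emeasure_arrival_law, simp, subst no_arrival, simp)
  moreover have "(\<lambda>a. indicator {0..x} a * (1 - survival \<omega> a x)) = (\<lambda>_. 0::real)"
    using False by (auto simp: indicator_def)
  ultimately show ?thesis by simp
qed

definition next_arrival_density :: "nat \<Rightarrow> real \<Rightarrow> real" where
  "next_arrival_density k r = (\<integral>a. indicator {0..r} a * waiting_density a r \<partial>arrival_law k)"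

lemma truncated_waiting_density_bounds:
  "0 \<le> indicator {0..r} a * waiting_density a r" "indicator {0..r} a * waiting_density a r \<le> B"
  using waiting_density_nonneg[of a r] waiting_density_le_bound[of a r] rate_bound_nonneg
  by (auto simp: indicator_def)

lemma integrable_truncated_waiting_density:
  "integrable (arrival_law k) (\<lambda>a. indicator {0..r} a * waiting_density a r)"
proof -
  interpret finite_borel_measure "arrival_law k" by (rule finite_borel_measure_arrival_law)
  show ?thesis
  proof (rule integrable_const_bound[where B=B])
    show "AE a in arrival_law k. norm (indicator {0..r} a * waiting_density a r) \<le> B"
      using truncated_waiting_density_bounds by (intro AE_I2) (simp only: real_norm_def abs_of_nonneg)
  qed measurable
qed

lemma next_arrival_density_nonneg: "0 \<le> next_arrival_density k r"
  unfolding next_arrival_density_def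
  by (rule integral_nonneg_AE) (simp add: truncated_waiting_density_bounds)

lemma next_arrival_density_measurable[measurable]: "next_arrival_density k \<in> borel_measurable borel"
proof -
  interpret finite_borel_measure "arrival_law k" by (rule finite_borel_measure_arrival_law)
  show ?thesis
    unfolding next_arrival_density_def[abs_def]
    by (rule borel_measurable_lebesgue_integral) (simp only: split_beta', measurable)
qed

lemma nn_integral_truncated_waiting_density_atMost:
  "(\<integral>\<^sup>+ r. ennreal (indicator {0..r} a * waiting_density a r) * indicator {..x} r \<partial>lborel)
   = ennreal (indicator {0..x} a * (1 - survival \<omega> a x))"
proof (cases "0 \<le> a \<and> a \<le> x")
  case True
  have "(\<integral>\<^sup>+ r. ennreal (indicator {0..r} a * waiting_density a r) * indicator {..x} r \<partial>lborel)
     = (\<integral>\<^sup>+ r. ennreal (waiting_density a r) * indicator {a..x} r \<partial>lborel)"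
    using True by (intro nn_integral_cong) (auto simp: indicator_def)
  also have "\<dots> = ennreal (1 - survival \<omega> a x)"
    using True waiting_density_nonneg
    by (intro nn_integral_has_integral_lebesgue' waiting_density_has_integral) auto
  finally show ?thesis
    using True by simp
next
  case False
  then have "(\<lambda>r. ennreal (indicator {0..r} a * waiting_density a r) * indicator {..x} r) = (\<lambda>_. 0)"
    by (auto simp: indicator_def fun_eq_iff)
  with False show ?thesis by simp
qed

lemma emeasure_next_arrival_density_atMost:
  "emeasure (density lborel (next_arrival_density k)) {..x}
   = ennreal (\<integral>a. indicator {0..x} a * (1 - survival \<omega> a x) \<partial>arrival_law k)"
proof -
  interpret finite_borel_measure "arrival_law k" by (rule finite_borel_measure_arrival_law)
  interpret pair_sigma_finite "arrival_law k" lborel ..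
  have "emeasure (density lborel (next_arrival_density k)) {..x}
      = (\<integral>\<^sup>+ r. ennreal (next_arrival_density k r) * indicator {..x} r \<partial>lborel)"
    by (rule emeasure_density) auto
  also have "\<dots> = (\<integral>\<^sup>+ r. (\<integral>\<^sup>+ a. ennreal (indicator {0..r} a * waiting_density a r) * indicator {..x} r
      \<partial>arrival_law k) \<partial>lborel)"
  proof (intro nn_integral_cong)
    fix r
    have "ennreal (next_arrival_density k r)
        = (\<integral>\<^sup>+ a. ennreal (indicator {0..r} a * waiting_density a r) \<partial>arrival_law k)"
      unfolding next_arrival_density_def
      by (rule nn_integral_eq_integral[OF integrable_truncated_waiting_density, symmetric])
        (simp add: truncated_waiting_density_bounds)
    then show "ennreal (next_arrival_density k r) * indicator {..x} r = (\<integral>\<^sup>+ a.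
        ennreal (indicator {0..r} a * waiting_density a r) * indicator {..x} r \<partial>arrival_law k)"
      by (simp add: nn_integral_multc)
  qed
  also have "\<dots> = (\<integral>\<^sup>+ a. (\<integral>\<^sup>+ r. ennreal (indicator {0..r} a * waiting_density a r) * indicator {..x} r
      \<partial>lborel) \<partial>arrival_law k)"
    by (rule Fubini') (simp only: split_beta', measurable)
  also have "\<dots> = ennreal (\<integral>a. indicator {0..x} a * (1 - survival \<omega> a x) \<partial>arrival_law k)"
  proof -
    have bounds: "0 \<le> indicator {0..x} a * (1 - survival \<omega> a x)"
      "indicator {0..x} a * (1 - survival \<omega> a x) \<le> 1" for a
      using survival_le_1[of a x] by (auto simp: indicator_def survival_def)
    have "integrable (arrival_law k) (\<lambda>a. indicator {0..x} a * (1 - survival \<omega> a x))"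
    proof (rule integrable_const_bound[where B=1])
      show "AE a in arrival_law k. norm (indicator {0..x} a * (1 - survival \<omega> a x)) \<le> 1"
        using bounds by (intro AE_I2) (simp only: real_norm_def abs_of_nonneg)
    qed measurable
    then show ?thesis
      unfolding nn_integral_truncated_waiting_density_atMost
      by (rule nn_integral_eq_integral) (simp add: bounds)
  qed
  finally show ?thesis .
qed

lemma arrival_law_Suc_eq_density:
  "arrival_law (Suc k) = density lborel (next_arrival_density k)"
proof -
  let ?D = "density lborel (\<lambda>r. ennreal (next_arrival_density k r))"
  have cdf_eq: "emeasure ?D {..x} = ennreal (measure (arrival_law (Suc k)) {..x})" for x
    by (simp add: emeasure_next_arrival_density_atMost measure_arrival_law_Suc_atMost)
  have "(SUP n. emeasure ?D {..real n}) = emeasure ?D (\<Union>n. {..real n})"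
    by (rule SUP_emeasure_incseq) (auto simp: incseq_def)
  moreover have "(\<Union>n. {..real n}) = UNIV"
    by (auto intro: real_arch_simple)
  moreover have "emeasure ?D {..real n} \<le> 1" for n
    by (simp add: cdf_eq measure_arrival_law_le_1)
  ultimately have "emeasure ?D UNIV \<le> 1"
    by (metis SUP_least)
  then have "finite_borel_measure ?D"
    unfolding finite_borel_measure_def finite_borel_measure_axioms_def
    by (auto intro!: finite_measureI simp: top_unique)
  then show ?thesis
  proof (rule cdf_unique'[OF finite_borel_measure_arrival_law])
    show "cdf (arrival_law (Suc k)) = cdf ?D"
      by (simp add: cdf_def fun_eq_iff measure_def cdf_eq)
  qed
qed

lemma arrival_law_singleton: "0 < r \<Longrightarrow> emeasure (arrival_law k) {r} = 0"
proof (cases k)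
  case 0
  assume "0 < r"
  with 0 show ?thesis
    by (simp add: emeasure_arrival_law arrival_time_0)
next
  case (Suc j)
  have "emeasure (arrival_law k) {r} = (\<integral>\<^sup>+ x. ennreal (next_arrival_density j x) * indicator {r} x \<partial>lborel)"
    unfolding Suc arrival_law_Suc_eq_density by (rule emeasure_density) auto
  also have "\<dots> = 0"
    using AE_lborel_singleton[of r] by (auto simp: indicator_def intro!: nn_integral_zero')
  finally show ?thesis .
qed

text \<open>By dominated convergence: the jump of the integrand at \<open>a = r\<close> is invisible, since
  \<open>\<tau> k\<close> has no atom at \<open>r > 0\<close>.\<close>
lemma next_arrival_density_continuous: "continuous_on {0..} (next_arrival_density k)"
proof (rule continuous_on_sequentiallyI)
  fix u :: "nat \<Rightarrow> real" and a :: real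
  assume u: "\<forall>n. u n \<in> {0..}" and "a \<in> {0..}" and lim: "u \<longlonglongrightarrow> a"
  interpret finite_borel_measure "arrival_law k" by (rule finite_borel_measure_arrival_law)
  have no_atom: "AE b in arrival_law k. b \<noteq> a \<or> a = 0"
  proof (cases "a = 0")
    case False
    with \<open>a \<in> {0..}\<close> have "0 < a" by simp
    then show ?thesis
      by (intro AE_I[of _ _ "{a}"]) (auto simp: arrival_law_singleton)
  qed simp
  show "(\<lambda>n. next_arrival_density k (u n)) \<longlonglongrightarrow> next_arrival_density k a"
    unfolding next_arrival_density_def
  proof (rule integral_dominated_convergence[where w="\<lambda>_. B"])
    show "AE b in arrival_law k. (\<lambda>n. indicator {0..u n} b * waiting_density b (u n))
        \<longlonglongrightarrow> indicator {0..a} b * waiting_density b a"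
      using no_atom by eventually_elim (use lim u in \<open>auto intro: truncated_waiting_density_tendsto\<close>)
    show "AE b in arrival_law k. norm (indicator {0..u n} b * waiting_density b (u n)) \<le> B" for n
      using truncated_waiting_density_bounds by (intro AE_I2) (simp only: real_norm_def abs_of_nonneg)
  qed auto
qed

lemma measure_count_stays:
  assumes "0 \<le> v" and "v \<le> r"
  shows "measure M {x \<in> space M. N r x = Suc j \<and> N v x = Suc j}
     = integral {0..v} (\<lambda>a. next_arrival_density j a * survival \<omega> a r)"
proof -
  have continuous: "continuous_on {0..v} (\<lambda>a. next_arrival_density j a * survival \<omega> a r)"
    by (intro continuous_intros continuous_on_subset[OF next_arrival_density_continuous]
        continuous_on_curry_fst[OF survival_continuous]) auto
  have "{x \<in> space M. N r x = Suc j \<and> N v x = Suc j}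
      = {x \<in> space M. \<tau> (Suc j) x \<le> ereal v \<and> ereal r < \<tau> (Suc (Suc j)) x}"
    using count_stays_iff_arrival_times[OF _ assms] by blast
  then have "measure M {x \<in> space M. N r x = Suc j \<and> N v x = Suc j}
      = (\<integral>x. indicator {y \<in> space M. \<tau> (Suc j) y \<le> ereal v} x * survival \<omega> (real_of_ereal (\<tau> (Suc j) x)) r \<partial>M)"
    by (simp add: prob_between_arrivals[OF assms])
  also have "\<dots> = (\<integral>a. indicator {0..v} a * survival \<omega> a r \<partial>arrival_law (Suc j))"
    by (rule integral_arrival_law_atLeastAtMost[symmetric]) (use assms in auto)
  also have "\<dots> = (\<integral>a. next_arrival_density j a * (indicator {0..v} a * survival \<omega> a r) \<partial>lborel)"
    unfolding arrival_law_Suc_eq_density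
    by (subst integral_density) (auto intro: next_arrival_density_nonneg)
  also have "\<dots> = (LINT a:{0..v}|lborel. next_arrival_density j a * survival \<omega> a r)"
    unfolding set_lebesgue_integral_def
    by (intro Bochner_Integration.integral_cong) (auto simp: indicator_def)
  also have "\<dots> = integral {0..v} (\<lambda>a. next_arrival_density j a * survival \<omega> a r)"
    by (rule set_borel_integral_eq_integral(2)[OF borel_integrable_atLeastAtMost'[OF continuous]])
  finally show ?thesis .
qed

lemma count_stays_has_derivative_left:
  assumes "0 < u" and "u < t"
  shows "((\<lambda>v. measure M {x \<in> space M. N t x = Suc j \<and> N v x = Suc j}) has_real_derivative
      next_arrival_density j u * survival \<omega> u t) (at u)"
proof -
  let ?g = "\<lambda>a. next_arrival_density j a * survival \<omega> a t"
  have "continuous_on {0..t} ?g"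
    by (intro continuous_intros continuous_on_subset[OF next_arrival_density_continuous]
        continuous_on_curry_fst[OF survival_continuous]) auto
  then have "((\<lambda>v. integral {0..v} ?g) has_real_derivative ?g u) (at u within {0..t})"
    by (rule integral_has_real_derivative) (use assms in auto)
  then have "((\<lambda>v. integral {0..v} ?g) has_real_derivative ?g u) (at u)"
    using at_within_Icc_at[of 0 u t] assms by simp
  then show ?thesis
    by (rule has_field_derivative_transform_within_open[of _ _ _ "{0<..<t}"])
      (use assms measure_count_stays in auto)
qed

lemma count_stays_has_derivative_right:
  assumes "0 \<le> s" and "s < t"
  shows "((\<lambda>r. measure M {x \<in> space M. N r x = Suc j \<and> N s x = Suc j}) has_real_derivative
      - integral {0..s} (\<lambda>a. next_arrival_density j a * waiting_density a t)) (at t)"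
proof (rule has_field_derivative_transform_within_open[where S="{s<..}"])
  show "((\<lambda>r. integral {0..s} (\<lambda>a. next_arrival_density j a * survival \<omega> a r)) has_real_derivative
      - integral {0..s} (\<lambda>a. next_arrival_density j a * waiting_density a t)) (at t)"
    by (rule integral_survival_has_derivative[OF continuous_on_subset[OF next_arrival_density_continuous]])
      (use assms in auto)
qed (use assms measure_count_stays[of s] in auto)

end

theorem proposition3p1:
  fixes M :: "'a measure" and \<omega> :: "real \<Rightarrow> real \<Rightarrow> real" and N :: "real \<Rightarrow> 'a \<Rightarrow> nat"
  assumes "prob_space M"
    and "\<And>s t. 0 \<le> s \<Longrightarrow> s \<le> t \<Longrightarrow> 0 \<le> \<omega> s t"
    and "\<exists>B. \<forall>s t. 0 \<le> s \<and> s \<le> t \<longrightarrow> \<omega> s t \<le> B"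
    and "continuous_on {p. 0 \<le> fst p \<and> fst p \<le> snd p} (\<lambda>p. \<omega> (fst p) (snd p))"
    and "last_arrival_intensity_process M \<omega> N"
    and "k \<ge> 1" and "0 \<le> s" and "s < t"
  shows "(\<forall>u\<in>{0<..<s}.
            (\<lambda>v. measure M {x \<in> space M. N t x = k \<and> N v x = k}) differentiable (at u))
       \<and> (\<lambda>u. \<omega> u t * deriv (\<lambda>v. measure M {x \<in> space M. N t x = k \<and> N v x = k}) u)
            integrable_on {0..s}
       \<and> ((\<lambda>r. measure M {x \<in> space M. N r x = k \<and> N s x = k}) has_real_derivative
            - integral {0..s} (\<lambda>u. \<omega> u t *
                 deriv (\<lambda>v. measure M {x \<in> space M. N t x = k \<and> N v x = k}) u)) (at t)"
proof -
  obtain B where "\<forall>s t. 0 \<le> s \<and> s \<le> t \<longrightarrow> \<omega> s t \<le> B"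
    using assms(3) by blast
  with assms(1,2,4,5) interpret last_arrival_process M \<omega> B N
    by (simp add: last_arrival_process_def last_arrival_process_axioms_def bounded_rate_def
        bounded_rate_axioms_def continuous_rate_def prob_space_def)
  obtain j where k: "k = Suc j"
    using \<open>k \<ge> 1\<close> by (cases k) auto
  let ?P = "\<lambda>v. measure M {x \<in> space M. N t x = k \<and> N v x = k}"
  let ?h = "\<lambda>a. next_arrival_density j a * waiting_density a t"
  have deriv_P: "(?P has_real_derivative next_arrival_density j u * survival \<omega> u t) (at u)"
    if "u \<in> {0<..<s}" for u
    unfolding k using that \<open>s < t\<close> by (intro count_stays_has_derivative_left) auto
  have "continuous_on {0..s} ?h"
    by (intro continuous_intros continuous_on_subset[OF next_arrival_density_continuous]
        continuous_on_curry_fst[OF waiting_density_continuous]) auto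
  then have h_integral: "(?h has_integral integral {0..s} ?h) {0..s}"
    using integrable_continuous_interval integrable_integral by blast
  have "\<omega> u t * deriv ?P u = ?h u" if "u \<in> {0..s} - {0, s}" for u
    using DERIV_imp_deriv[OF deriv_P] that \<open>s < t\<close> by (simp add: waiting_density_def rate_ext_eq)
  from has_integral_spike_finite[of "{0, s}", OF _ this h_integral]
  have "((\<lambda>u. \<omega> u t * deriv ?P u) has_integral integral {0..s} ?h) {0..s}"
    by simp
  moreover have "((\<lambda>r. measure M {x \<in> space M. N r x = k \<and> N s x = k}) has_real_derivative
      - integral {0..s} ?h) (at t)"
    unfolding k using assms(7,8) by (rule count_stays_has_derivative_right)
  moreover have "\<forall>u\<in>{0<..<s}. ?P differentiable (at u)"
    using deriv_P real_differentiable_def by blast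
  ultimately show ?thesis
    by (simp add: has_integral_iff)
qed

end
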